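(* Let $X$ be a $T_0$ space. If $GSI_2$-convergence in $X$ is topological, then $X$ is strongly $QI_2$-continuous.
   Context: For a $T_0$ space $X$, the specialization order is $x\le y$ iff $x\in \mathrm{cl}\{y\}$; $\uparrow A=\{x: a\le x\text{ for some } a\in A\}$, $\uparrow x=\uparrow\{x\}$; $A^\uparrow$, $A^\downarrow$ are the sets of upper and lower bounds of $A$, and $A^\delta=(A^\uparrow)^\downarrow$. A nonempty subset $A$ of a space is irreducible if whenever $A\subseteq F_1\cup F_2$ with $F_1,F_2$ closed, $A\subseteq F_1$ or $A\subseteq F_2$. $X^{(<\omega)}$ is the set of nonempty finite subsets of $X$. $P_S(X)$ is the set of nonempty compact saturated (upper) subsets of $X$ with the upper Vietoris topology, basis $\{\square U: U\text{ open}\}$, $\square U=\{Q: Q\subseteq U\}$. A net is eventually in $U$ if from some index on all its terms lie in $U$; it converges to $x$ in a topology if it is eventually in every open set containing $x$. $U\subseteq X$ is $SI_2$-open if $U$ is open and for every irreducible $F\subseteq X$, $F^\delta\cap U\ne\emptyset$ implies $F\cap U\neq\emptyset$. A net $(x_i)_{i\in I}$ $GSI_2$-converges to $x$ if there exists $\mathcal F\subseteq X^{(<\omega)}$ with $\{\uparrow G: G\in\mathcal F\}$ irreducible in $P_S(X)$ such that (i) for every open $U$, if $\uparrow G\subseteq U$ for some $G\in\mathcal F$ then $x_i\in U$ eventually, and (ii) $\bigcap_{G\in\mathcal F}\uparrow G\subseteq\uparrow x$. Let $\mathcal{O}(\mathcal{GSI}_2(X))$ be the topology of all $U\subseteq X$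 such that every net $GSI_2$-converging to a point of $U$ is eventually in $U$. $GSI_2$-convergence in $X$ is topological if for every net and point, the net $GSI_2$-converges to the point iff it converges to it in the topology $\mathcal{O}(\mathcal{GSI}_2(X))$. For $A\subseteq X$, $x\in X$, $A\ll_{I_2}x$ means: for every irreducible $D\subseteq X$ with $x\in D^\delta$, $A\cap\mathrm{cl}D\ne\emptyset$. For $x\in X$, $w(x)=\{\uparrow F: F\in X^{(<\omega)}, F\ll_{I_2}x\}$. $X$ is $QI_2$-continuous if for every $x\in X$, $w(x)$ is irreducible in $P_S(X)$ and $\uparrow x=\bigcap w(x)$. $X$ is strongly $QI_2$-continuous if it is $QI_2$-continuous and for every $F\in X^{(<\omega)}$, $x\in X$ with $F\ll_{I_2}x$, and every open $U$ with $F\subseteq U$, there is an $SI_2$-open set $W$ with $x\in W\subseteq U$. *)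

theory Defs
  imports "HOL-Analysis.Analysis"
begin

definition spec_le :: "'a topology \<Rightarrow> 'a \<Rightarrow> 'a \<Rightarrow> bool" where
  "spec_le X x y \<longleftrightarrow> x \<in> topspace X \<and> y \<in> topspace X \<and> x \<in> X closure_of {y}"

definition upset :: "'a topology \<Rightarrow> 'a set \<Rightarrow> 'a set" where
  "upset X A = {x \<in> topspace X. \<exists>a\<in>A. spec_le X a x}"

definition upper_bounds :: "'a topology \<Rightarrow> 'a set \<Rightarrow> 'a set" where
  "upper_bounds X A = {u \<in> topspace X. \<forall>a\<in>A. spec_le X a u}"

definition lower_bounds :: "'a topology \<Rightarrow> 'a set \<Rightarrow> 'a set" where
  "lower_bounds X A = {l \<in> topspace X. \<forall>a\<in>A. spec_le X l a}"

definition cut_delta :: "'a topology \<Rightarrow> 'a set \<Rightarrow> 'a set" where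
  "cut_delta X A = lower_bounds X (upper_bounds X A)"

definition irreducible_in :: "'a topology \<Rightarrow> 'a set \<Rightarrow> bool" where
  "irreducible_in X A \<longleftrightarrow> A \<noteq> {} \<and> A \<subseteq> topspace X \<and>
     (\<forall>F1 F2. closedin X F1 \<longrightarrow> closedin X F2 \<longrightarrow> A \<subseteq> F1 \<union> F2 \<longrightarrow> A \<subseteq> F1 \<or> A \<subseteq> F2)"

definition fin_subsets :: "'a topology \<Rightarrow> 'a set set" where
  "fin_subsets X = {F. F \<subseteq> topspace X \<and> finite F \<and> F \<noteq> {}}"

definition saturated_in :: "'a topology \<Rightarrow> 'a set \<Rightarrow> bool" where
  "saturated_in X A \<longleftrightarrow> A \<subseteq> topspace X \<and> upset X A = A"

definition smyth_carrier :: "'a topology \<Rightarrow> 'a set set" where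
  "smyth_carrier X = {Q. Q \<noteq> {} \<and> compactin X Q \<and> saturated_in X Q}"

definition smyth_box :: "'a topology \<Rightarrow> 'a set \<Rightarrow> 'a set set" where
  "smyth_box X U = {Q \<in> smyth_carrier X. Q \<subseteq> U}"

definition smyth_space :: "'a topology \<Rightarrow> 'a set topology" where
  "smyth_space X = topology_generated_by {smyth_box X U | U. openin X U}"

definition SI2_open :: "'a topology \<Rightarrow> 'a set \<Rightarrow> bool" where
  "SI2_open X U \<longleftrightarrow> openin X U \<and>
     (\<forall>F. irreducible_in X F \<longrightarrow> cut_delta X F \<inter> U \<noteq> {} \<longrightarrow> F \<inter> U \<noteq> {})"

text \<open>Nets are represented by their filters of tails (eventuality filters), the
  standard Isabelle/HOL rendering of nets: a net in X is a proper filter F on 'a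
  that is eventually in topspace X; "the net is eventually in U" is
  \<open>eventually (\<lambda>y. y \<in> U) F\<close>.\<close>

definition net_in :: "'a topology \<Rightarrow> 'a filter \<Rightarrow> bool" where
  "net_in X F \<longleftrightarrow> F \<noteq> bot \<and> eventually (\<lambda>y. y \<in> topspace X) F"

definition GSI2_converges :: "'a topology \<Rightarrow> 'a filter \<Rightarrow> 'a \<Rightarrow> bool" where
  "GSI2_converges X F x \<longleftrightarrow>
     (\<exists>\<F>. \<F> \<subseteq> fin_subsets X \<and> irreducible_in (smyth_space X) (upset X ` \<F>) \<and>
        (\<forall>U. openin X U \<longrightarrow> (\<exists>G\<in>\<F>. upset X G \<subseteq> U) \<longrightarrow> eventually (\<lambda>y. y \<in> U) F) \<and>
        \<Inter> (upset X ` \<F>) \<subseteq> upset X {x})"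

definition GSI2_open :: "'a topology \<Rightarrow> 'a set \<Rightarrow> bool" where
  "GSI2_open X U \<longleftrightarrow> U \<subseteq> topspace X \<and>
     (\<forall>F x. net_in X F \<longrightarrow> x \<in> U \<longrightarrow> GSI2_converges X F x \<longrightarrow> eventually (\<lambda>y. y \<in> U) F)"

definition GSI2_topological :: "'a topology \<Rightarrow> bool" where
  "GSI2_topological X \<longleftrightarrow>
     (\<forall>F. \<forall>x\<in>topspace X. net_in X F \<longrightarrow>
        (GSI2_converges X F x \<longleftrightarrow>
         (\<forall>U. GSI2_open X U \<longrightarrow> x \<in> U \<longrightarrow> eventually (\<lambda>y. y \<in> U) F)))"

definition I2_way_below :: "'a topology \<Rightarrow> 'a set \<Rightarrow> 'a \<Rightarrow> bool" where
  "I2_way_below X A x \<longleftrightarrow>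
     (\<forall>D. irreducible_in X D \<longrightarrow> x \<in> cut_delta X D \<longrightarrow> A \<inter> (X closure_of D) \<noteq> {})"

definition wI2 :: "'a topology \<Rightarrow> 'a \<Rightarrow> 'a set set" where
  "wI2 X x = {upset X F | F. F \<in> fin_subsets X \<and> I2_way_below X F x}"

definition QI2_continuous :: "'a topology \<Rightarrow> bool" where
  "QI2_continuous X \<longleftrightarrow>
     (\<forall>x\<in>topspace X. irreducible_in (smyth_space X) (wI2 X x) \<and> upset X {x} = \<Inter> (wI2 X x))"

definition strongly_QI2_continuous :: "'a topology \<Rightarrow> bool" where
  "strongly_QI2_continuous X \<longleftrightarrow> QI2_continuous X \<and>
     (\<forall>F x U. F \<in> fin_subsets X \<longrightarrow> x \<in> topspace X \<longrightarrow> I2_way_below X F x \<longrightarrow>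
        openin X U \<longrightarrow> F \<subseteq> U \<longrightarrow> (\<exists>W. SI2_open X W \<and> x \<in> W \<and> W \<subseteq> U))"

end

theory Submission
  imports Defs
begin

(* Since GSI_2-convergence is topological, the filter of O(GSI_2(X))-neighbourhoods of x
   GSI_2-converges to x; fix a family Phi of finite sets witnessing this. Every
   O(GSI_2(X))-open set is SI_2-open, as one sees by testing it against two kinds of
   GSI_2-convergent nets: neighbourhood filters, and the traces of open sets on an irreducible
   set D, which converge to every point of D^delta. Hence every member of Phi is way below x,
   and Phi provides the SI_2-open neighbourhoods required by strong continuity. Conversely, by
   Rudin's lemma, every finite set way below x and contained in an open U is refined by a
   member of Phi inside U. So w(x) lies between the irreducible set {up G : G in Phi} and its
   closure in P_S(X), which makes it irreducible with intersection up x. *)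

lemma spec_le_refl: "x \<in> topspace X \<Longrightarrow> spec_le X x x"
  using closure_of_subset[of "{x}" X] by (simp add: spec_le_def)

lemma spec_le_trans: "spec_le X a b \<Longrightarrow> spec_le X b c \<Longrightarrow> spec_le X a c"
  unfolding spec_le_def using closure_of_minimal[of "{b}" "X closure_of {c}" X] by auto

lemma spec_le_closedin: "closedin X A \<Longrightarrow> u \<in> A \<Longrightarrow> spec_le X a u \<Longrightarrow> a \<in> A"
  unfolding spec_le_def using closure_of_minimal[of "{u}" A X] by auto

lemma spec_le_openin: "openin X U \<Longrightarrow> a \<in> U \<Longrightarrow> spec_le X a u \<Longrightarrow> u \<in> U"
  using spec_le_closedin[of X "topspace X - U" u a] by (auto simp: spec_le_def)

lemma mem_upset_singleton: "u \<in> upset X {x} \<longleftrightarrow> spec_le X x u"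
  by (auto simp: upset_def spec_le_def)

lemma subset_upset: "G \<subseteq> topspace X \<Longrightarrow> G \<subseteq> upset X G"
  by (auto simp: upset_def intro: spec_le_refl)

lemma upset_subset_openin: "openin X U \<Longrightarrow> G \<subseteq> U \<Longrightarrow> upset X G \<subseteq> U"
  unfolding upset_def by (blast intro: spec_le_openin)

lemma upset_idem: "upset X (upset X A) = upset X A"
proof
  show "upset X (upset X A) \<subseteq> upset X A"
    unfolding upset_def by (blast intro: spec_le_trans)
  show "upset X A \<subseteq> upset X (upset X A)"
    by (rule subset_upset) (auto simp: upset_def)
qed

lemma compactin_upset:
  assumes "compactin X K"
  shows "compactin X (upset X K)"
  unfolding compactin_def
proof (intro conjI allI impI)
  show "upset X K \<subseteq> topspace X"
    by (auto simp: upset_def)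
  fix \<U> assume \<U>: "(\<forall>U\<in>\<U>. openin X U) \<and> upset X K \<subseteq> \<Union>\<U>"
  have "K \<subseteq> upset X K"
    by (rule subset_upset[OF compactin_subset_topspace[OF assms]])
  with \<U> have "K \<subseteq> \<Union>\<U>"
    by blast
  with \<U> assms obtain \<F> where \<F>: "finite \<F>" "\<F> \<subseteq> \<U>" "K \<subseteq> \<Union>\<F>"
    unfolding compactin_def by meson
  have "openin X (\<Union>\<F>)"
    using \<F>(2) \<U> by (intro openin_Union) auto
  then have "upset X K \<subseteq> \<Union>\<F>"
    using \<F>(3) by (rule upset_subset_openin)
  with \<F> show "\<exists>\<F>. finite \<F> \<and> \<F> \<subseteq> \<U> \<and> upset X K \<subseteq> \<Union>\<F>"
    by blast
qed

lemma in_cut_delta_singleton: "x \<in> topspace X \<Longrightarrow> x \<in> cut_delta X {x}"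
  by (auto simp: cut_delta_def lower_bounds_def upper_bounds_def)

lemma irreducible_in_singleton: "a \<in> topspace T \<Longrightarrow> irreducible_in T {a}"
  by (auto simp: irreducible_in_def)

lemma irreducible_in_Int_openin:
  assumes "irreducible_in T S" "openin T U" "openin T V" "S \<inter> U \<noteq> {}" "S \<inter> V \<noteq> {}"
  shows "S \<inter> U \<inter> V \<noteq> {}"
proof
  assume "S \<inter> U \<inter> V = {}"
  then have "S \<subseteq> (topspace T - U) \<union> (topspace T - V)"
    using assms(1) by (auto simp: irreducible_in_def)
  moreover have "closedin T (topspace T - U)" "closedin T (topspace T - V)"
    using assms(2,3) by auto
  ultimately have "S \<subseteq> topspace T - U \<or> S \<subseteq> topspace T - V"
    using assms(1) unfolding irreducible_in_def by blast
  then show False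
    using assms(4,5) by blast
qed

lemma irreducible_in_continuous_map_image:
  assumes f: "continuous_map X Y f" and S: "irreducible_in X S"
  shows "irreducible_in Y (f ` S)"
  unfolding irreducible_in_def
proof (intro conjI allI impI)
  show "f ` S \<noteq> {}" "f ` S \<subseteq> topspace Y"
    using S continuous_map_image_subset_topspace[OF f] by (auto simp: irreducible_in_def)
  fix K1 K2 assume K: "closedin Y K1" "closedin Y K2" "f ` S \<subseteq> K1 \<union> K2"
  have "closedin X {x \<in> topspace X. f x \<in> K1}" "closedin X {x \<in> topspace X. f x \<in> K2}"
    using K f by (auto intro: closedin_continuous_map_preimage)
  moreover have "S \<subseteq> {x \<in> topspace X. f x \<in> K1} \<union> {x \<in> topspace X. f x \<in> K2}"
    using K S by (auto simp: irreducible_in_def)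
  ultimately show "f ` S \<subseteq> K1 \<or> f ` S \<subseteq> K2"
    using S unfolding irreducible_in_def by blast
qed

lemma irreducible_in_closure_between:
  assumes S: "irreducible_in T S" and "S \<subseteq> S'" "S' \<subseteq> T closure_of S"
  shows "irreducible_in T S'"
  unfolding irreducible_in_def
proof (intro conjI allI impI)
  have "S \<noteq> {}"
    using S by (simp add: irreducible_in_def)
  then show "S' \<noteq> {}"
    using \<open>S \<subseteq> S'\<close> by blast
  show "S' \<subseteq> topspace T"
    by (rule order_trans[OF assms(3) closure_of_subset_topspace])
  fix K1 K2 assume K: "closedin T K1" "closedin T K2" "S' \<subseteq> K1 \<union> K2"
  then have "S \<subseteq> K1 \<or> S \<subseteq> K2"
    using assms unfolding irreducible_in_def by blast
  then show "S' \<subseteq> K1 \<or> S' \<subseteq> K2"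
    using K assms(3) closure_of_minimal by blast
qed

section \<open>The Smyth power space\<close>

lemma upset_in_smyth_carrier:
  assumes "G \<in> fin_subsets X"
  shows "upset X G \<in> smyth_carrier X"
proof -
  have G: "G \<subseteq> topspace X" "finite G" "G \<noteq> {}"
    using assms by (auto simp: fin_subsets_def)
  have "compactin X (upset X G)"
    using G by (intro compactin_upset finite_imp_compactin)
  moreover have "upset X G \<noteq> {}"
    using subset_upset[OF G(1)] G(3) by blast
  moreover have "saturated_in X (upset X G)"
    unfolding saturated_in_def upset_idem by (auto simp: upset_def)
  ultimately show ?thesis
    by (simp add: smyth_carrier_def)
qed

lemma topspace_smyth_space: "topspace (smyth_space X) = smyth_carrier X"
proof -
  have "\<Union>{smyth_box X U |U. openin X U} = smyth_carrier X"
  proof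
    show "\<Union>{smyth_box X U |U. openin X U} \<subseteq> smyth_carrier X"
      by (auto simp: smyth_box_def)
    have "smyth_carrier X = smyth_box X (topspace X)"
      by (auto simp: smyth_box_def smyth_carrier_def dest: compactin_subset_topspace)
    then show "smyth_carrier X \<subseteq> \<Union>{smyth_box X U |U. openin X U}"
      by blast
  qed
  then show ?thesis
    by (simp add: smyth_space_def)
qed

lemma openin_smyth_box: "openin X U \<Longrightarrow> openin (smyth_space X) (smyth_box X U)"
  unfolding smyth_space_def by (rule topology_generated_by_Basis) blast

lemma upset_in_smyth_box_iff:
  assumes "G \<in> fin_subsets X" "openin X U"
  shows "upset X G \<in> smyth_box X U \<longleftrightarrow> G \<subseteq> U"
proof
  assume "upset X G \<in> smyth_box X U"
  moreover have "G \<subseteq> upset X G"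
    using assms(1) by (intro subset_upset) (simp add: fin_subsets_def)
  ultimately show "G \<subseteq> U"
    by (auto simp: smyth_box_def)
next
  assume "G \<subseteq> U"
  then have "upset X G \<subseteq> U"
    by (rule upset_subset_openin[OF assms(2)])
  then show "upset X G \<in> smyth_box X U"
    using upset_in_smyth_carrier[OF assms(1)] by (simp add: smyth_box_def)
qed

lemma openin_smyth_space_imp_box:
  assumes "openin (smyth_space X) \<O>" "Q \<in> \<O>"
  shows "\<exists>V. openin X V \<and> Q \<in> smyth_box X V \<and> smyth_box X V \<subseteq> \<O>"
proof -
  have "generate_topology_on {smyth_box X U |U. openin X U} \<O>"
    using assms(1) unfolding smyth_space_def by (rule openin_topology_generated_by)
  then show ?thesis
    using assms(2)
  proof (induction arbitrary: Q)
    case (Int \<O>1 \<O>2)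
    obtain V1 where "openin X V1" "Q \<in> smyth_box X V1" "smyth_box X V1 \<subseteq> \<O>1"
      using Int.IH(1) Int.prems by blast
    moreover obtain V2 where "openin X V2" "Q \<in> smyth_box X V2" "smyth_box X V2 \<subseteq> \<O>2"
      using Int.IH(2) Int.prems by blast
    ultimately show ?case
      by (intro exI[of _ "V1 \<inter> V2"]) (auto simp: smyth_box_def)
  next
    case (UN \<K>)
    then obtain \<O> where \<O>: "\<O> \<in> \<K>" "Q \<in> \<O>"
      by blast
    then obtain V where "openin X V" "Q \<in> smyth_box X V" "smyth_box X V \<subseteq> \<O>"
      using UN.IH[OF \<O>] by blast
    with \<O>(1) show ?case
      by blast
  qed auto
qed

lemma in_closure_of_smyth_spaceI:
  assumes Q: "Q \<in> smyth_carrier X"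
    and meets: "\<And>V. openin X V \<Longrightarrow> Q \<subseteq> V \<Longrightarrow> \<exists>P\<in>\<S>. P \<in> smyth_box X V"
  shows "Q \<in> smyth_space X closure_of \<S>"
  unfolding in_closure_of topspace_smyth_space
proof (intro conjI allI impI)
  show "Q \<in> smyth_carrier X"
    by (fact Q)
  fix \<O> assume "Q \<in> \<O> \<and> openin (smyth_space X) \<O>"
  then obtain V where V: "openin X V" "Q \<in> smyth_box X V" "smyth_box X V \<subseteq> \<O>"
    using openin_smyth_space_imp_box by blast
  have "Q \<subseteq> V"
    using V(2) by (simp add: smyth_box_def)
  then obtain P where "P \<in> \<S>" "P \<in> smyth_box X V"
    using meets[OF V(1)] by blast
  with V(3) show "\<exists>P. P \<in> \<S> \<and> P \<in> \<O>"
    by blast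
qed

lemma continuous_map_upset_singleton: "continuous_map X (smyth_space X) (\<lambda>x. upset X {x})"
  unfolding smyth_space_def
proof (rule continuous_on_generated_topo)
  fix \<U> assume "\<U> \<in> {smyth_box X U |U. openin X U}"
  then obtain U where U: "openin X U" "\<U> = smyth_box X U"
    by blast
  have "upset X {x} \<in> smyth_box X U \<longleftrightarrow> x \<in> U" if "x \<in> topspace X" for x
    using that U(1) by (simp add: upset_in_smyth_box_iff fin_subsets_def)
  then have "(\<lambda>x. upset X {x}) -` \<U> \<inter> topspace X = U"
    using U openin_subset[OF U(1)] by auto
  then show "openin X ((\<lambda>x. upset X {x}) -` \<U> \<inter> topspace X)"
    using U(1) by simp
next
  show "(\<lambda>x. upset X {x}) ` topspace X \<subseteq> \<Union>{smyth_box X U |U. openin X U}"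
    using topspace_smyth_space[of X] upset_in_smyth_carrier[of _ X]
    unfolding smyth_space_def by (auto simp: fin_subsets_def)
qed

lemma irreducible_upsets_directed:
  assumes \<F>: "\<F> \<subseteq> fin_subsets X" and irr: "irreducible_in (smyth_space X) (upset X ` \<F>)"
    and U: "openin X U" "G1 \<in> \<F>" "G1 \<subseteq> U"
    and V: "openin X V" "G2 \<in> \<F>" "G2 \<subseteq> V"
  obtains G where "G \<in> \<F>" "G \<subseteq> U \<inter> V"
proof -
  have "upset X G1 \<in> smyth_box X U" "upset X G2 \<in> smyth_box X V"
    using \<F> U V by (auto simp: upset_in_smyth_box_iff)
  then have "upset X ` \<F> \<inter> smyth_box X U \<inter> smyth_box X V \<noteq> {}"
    using U(2) V(2)
    by (intro irreducible_in_Int_openin[OF irr openin_smyth_box[OF U(1)] openin_smyth_box[OF V(1)]])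
      blast+
  then obtain G where G: "G \<in> \<F>" "upset X G \<in> smyth_box X U" "upset X G \<in> smyth_box X V"
    by blast
  then have "G \<in> fin_subsets X"
    using \<F> by blast
  with G U(1) V(1) show thesis
    by (intro that) (auto simp: upset_in_smyth_box_iff)
qed

section \<open>Rudin's lemma\<close>

lemma maximal_openin_avoiding:
  assumes fin: "\<forall>G\<in>\<F>. finite G" and U: "openin X U" "\<forall>G\<in>\<F>. \<not> G \<subseteq> U"
  obtains W where "openin X W" "U \<subseteq> W" "\<forall>G\<in>\<F>. \<not> G \<subseteq> W"
    "\<And>W'. openin X W' \<Longrightarrow> W \<subseteq> W' \<Longrightarrow> \<forall>G\<in>\<F>. \<not> G \<subseteq> W' \<Longrightarrow> W' = W"
proof -
  define \<A> where "\<A> = {W. openin X W \<and> U \<subseteq> W \<and> (\<forall>G\<in>\<F>. \<not> G \<subseteq> W)}"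
  have "\<exists>M\<in>\<A>. \<forall>W\<in>\<A>. M \<subseteq> W \<longrightarrow> W = M"
  proof (rule subset_Zorn_nonempty)
    show "\<A> \<noteq> {}"
      using U by (auto simp: \<A>_def)
    fix \<C> assume "\<C> \<noteq> {}" and ch: "subset.chain \<A> \<C>"
    then have \<C>: "\<C> \<subseteq> \<A>"
      by (simp add: subset_chain_def)
    have "\<not> G \<subseteq> \<Union>\<C>" if "G \<in> \<F>" for G
    proof
      assume "G \<subseteq> \<Union>\<C>"
      moreover have "finite G"
        using fin that by blast
      ultimately obtain W where "W \<in> \<C>" "G \<subseteq> W"
        using finite_subset_Union_chain[OF _ _ \<open>\<C> \<noteq> {}\<close> ch] by blast
      then show False
        using \<C> that by (auto simp: \<A>_def)
    qed
    moreover have "openin X (\<Union>\<C>)"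
      using \<C> by (intro openin_Union) (auto simp: \<A>_def)
    moreover have "U \<subseteq> \<Union>\<C>"
      using \<C> \<open>\<C> \<noteq> {}\<close> by (auto simp: \<A>_def)
    ultimately show "\<Union>\<C> \<in> \<A>"
      by (simp add: \<A>_def)
  qed
  then obtain W where "W \<in> \<A>" "\<forall>W'\<in>\<A>. W \<subseteq> W' \<longrightarrow> W' = W"
    by blast
  then show thesis
    by (intro that) (auto simp: \<A>_def)
qed

lemma irreducible_closedin_meeting_fin_subsets:
  assumes \<F>: "\<F> \<subseteq> fin_subsets X" and irr: "irreducible_in (smyth_space X) (upset X ` \<F>)"
    and U: "openin X U" "\<forall>G\<in>\<F>. \<not> G \<subseteq> U"
  obtains A where "closedin X A" "irreducible_in X A" "A \<inter> U = {}" "\<forall>G\<in>\<F>. A \<inter> G \<noteq> {}"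
proof -
  have fin: "\<forall>G\<in>\<F>. finite G" and top: "\<forall>G\<in>\<F>. G \<subseteq> topspace X"
    using \<F> by (auto simp: fin_subsets_def)
  obtain W where W: "openin X W" "U \<subseteq> W" "\<forall>G\<in>\<F>. \<not> G \<subseteq> W"
    and max: "\<And>W'. openin X W' \<Longrightarrow> W \<subseteq> W' \<Longrightarrow> \<forall>G\<in>\<F>. \<not> G \<subseteq> W' \<Longrightarrow> W' = W"
    using maximal_openin_avoiding[OF fin U] by blast
  define A where "A = topspace X - W"
  have meets: "\<forall>G\<in>\<F>. A \<inter> G \<noteq> {}"
    using W(3) top by (auto simp: A_def)
  have "irreducible_in X A"
    unfolding irreducible_in_def
  proof (intro conjI allI impI)
    have "\<F> \<noteq> {}"
      using irr by (auto simp: irreducible_in_def)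
    then show "A \<noteq> {}"
      using meets by blast
    show "A \<subseteq> topspace X"
      by (auto simp: A_def)
    fix F1 F2 assume F: "closedin X F1" "closedin X F2" "A \<subseteq> F1 \<union> F2"
    show "A \<subseteq> F1 \<or> A \<subseteq> F2"
    proof (rule ccontr)
      assume "\<not> (A \<subseteq> F1 \<or> A \<subseteq> F2)"
      have enlarge: "\<exists>G\<in>\<F>. G \<subseteq> W \<union> (topspace X - F)" if "closedin X F" "\<not> A \<subseteq> F" for F
      proof (rule ccontr)
        assume "\<not> (\<exists>G\<in>\<F>. G \<subseteq> W \<union> (topspace X - F))"
        then have "W \<union> (topspace X - F) = W"
          using that(1) W(1) by (intro max) auto
        then show False
          using that(2) by (auto simp: A_def)
      qed
      obtain G1 G2 where "G1 \<in> \<F>" "G1 \<subseteq> W \<union> (topspace X - F1)"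
        and "G2 \<in> \<F>" "G2 \<subseteq> W \<union> (topspace X - F2)"
        using enlarge F(1,2) \<open>\<not> (A \<subseteq> F1 \<or> A \<subseteq> F2)\<close> by meson
      then obtain G where "G \<in> \<F>" "G \<subseteq> (W \<union> (topspace X - F1)) \<inter> (W \<union> (topspace X - F2))"
        using irreducible_upsets_directed[OF \<F> irr] W(1) F(1,2) by (metis openin_Un openin_diff openin_topspace)
      moreover have "(W \<union> (topspace X - F1)) \<inter> (W \<union> (topspace X - F2)) \<subseteq> W"
        using F(3) by (auto simp: A_def)
      ultimately show False
        using W(3) by blast
    qed
  qed
  moreover have "closedin X A"
    using W(1) by (simp add: A_def closedin_diff)
  moreover have "A \<inter> U = {}"
    using W(2) by (auto simp: A_def)
  ultimately show thesis
    using that meets by blast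
qed

section \<open>GSI_2-convergence and SI_2-open sets\<close>

lemma GSI2_convergesI_irreducible:
  assumes D: "irreducible_in X D" and x: "x \<in> cut_delta X D"
    and ev: "\<And>U. openin X U \<Longrightarrow> U \<inter> D \<noteq> {} \<Longrightarrow> eventually (\<lambda>y. y \<in> U) F"
  shows "GSI2_converges X F x"
  unfolding GSI2_converges_def
proof (intro exI[of _ "(\<lambda>d. {d}) ` D"] conjI allI impI)
  have D_top: "D \<subseteq> topspace X"
    using D by (simp add: irreducible_in_def)
  then show "(\<lambda>d. {d}) ` D \<subseteq> fin_subsets X"
    by (auto simp: fin_subsets_def)
  have "upset X ` (\<lambda>d. {d}) ` D = (\<lambda>d. upset X {d}) ` D"
    by (simp add: image_image)
  then show "irreducible_in (smyth_space X) (upset X ` (\<lambda>d. {d}) ` D)"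
    using irreducible_in_continuous_map_image[OF continuous_map_upset_singleton D] by simp
  fix U assume "openin X U" "\<exists>G\<in>(\<lambda>d. {d}) ` D. upset X G \<subseteq> U"
  then obtain d where "d \<in> D" "upset X {d} \<subseteq> U"
    by blast
  moreover have "d \<in> upset X {d}"
    using \<open>d \<in> D\<close> D_top by (simp add: mem_upset_singleton spec_le_refl subset_iff)
  ultimately show "eventually (\<lambda>y. y \<in> U) F"
    using ev[OF \<open>openin X U\<close>] by blast
next
  show "\<Inter> (upset X ` (\<lambda>d. {d}) ` D) \<subseteq> upset X {x}"
  proof
    fix u assume "u \<in> \<Inter> (upset X ` (\<lambda>d. {d}) ` D)"
    then have "\<forall>d\<in>D. spec_le X d u"
      by (simp add: mem_upset_singleton)
    moreover have "D \<noteq> {}"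
      using D by (simp add: irreducible_in_def)
    ultimately have "u \<in> upper_bounds X D"
      by (auto simp: upper_bounds_def spec_le_def)
    then show "u \<in> upset X {x}"
      using x by (simp add: cut_delta_def lower_bounds_def mem_upset_singleton)
  qed
qed

lemma net_in_nhdsin: "x \<in> topspace X \<Longrightarrow> net_in X (nhdsin X x)"
  unfolding net_in_def eventually_False[symmetric] by (auto simp: eventually_nhdsin)

text \<open>For irreducible \<open>D\<close> the traces on \<open>D\<close> of the open sets meeting \<open>D\<close> form a filter base.\<close>

definition open_trace_filter :: "'a topology \<Rightarrow> 'a set \<Rightarrow> 'a filter" where
  "open_trace_filter X D = (INF U\<in>{U. openin X U \<and> U \<inter> D \<noteq> {}}. principal (U \<inter> D))"

lemma eventually_open_trace_filter:
  assumes D: "irreducible_in X D"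
  shows "eventually P (open_trace_filter X D) \<longleftrightarrow> (\<exists>U. openin X U \<and> U \<inter> D \<noteq> {} \<and> (\<forall>y\<in>U \<inter> D. P y))"
proof -
  let ?B = "{U. openin X U \<and> U \<inter> D \<noteq> {}}"
  have "topspace X \<in> ?B"
    using D by (auto simp: irreducible_in_def)
  then have "?B \<noteq> {}"
    by blast
  moreover have "\<exists>W\<in>?B. principal (W \<inter> D) \<le> inf (principal (U \<inter> D)) (principal (V \<inter> D))"
    if "U \<in> ?B" "V \<in> ?B" for U V
  proof -
    have "openin X U" "openin X V" "D \<inter> U \<noteq> {}" "D \<inter> V \<noteq> {}"
      using that by auto
    then have "D \<inter> U \<inter> V \<noteq> {}"
      by (rule irreducible_in_Int_openin[OF D])
    with that show ?thesis
      by (intro bexI[of _ "U \<inter> V"]) (auto simp: Int_ac)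
  qed
  ultimately have "eventually P (open_trace_filter X D) \<longleftrightarrow> (\<exists>U\<in>?B. eventually P (principal (U \<inter> D)))"
    unfolding open_trace_filter_def by (rule eventually_INF_base)
  then show ?thesis
    by (simp add: eventually_principal)
qed

lemma net_in_open_trace_filter: "irreducible_in X D \<Longrightarrow> net_in X (open_trace_filter X D)"
  unfolding net_in_def eventually_False[symmetric]
  by (auto simp: eventually_open_trace_filter irreducible_in_def)

lemma GSI2_open_imp_openin:
  assumes V: "GSI2_open X V"
  shows "openin X V"
proof (subst openin_subopen, intro ballI)
  fix v assume "v \<in> V"
  then have v: "v \<in> topspace X"
    using V by (auto simp: GSI2_open_def)
  have "eventually (\<lambda>y. y \<in> U) (nhdsin X v)" if "openin X U" "U \<inter> {v} \<noteq> {}" for U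
    using that by (auto simp: eventually_nhdsin)
  then have "GSI2_converges X (nhdsin X v) v"
    by (rule GSI2_convergesI_irreducible[OF irreducible_in_singleton[OF v] in_cut_delta_singleton[OF v]])
  then have "eventually (\<lambda>y. y \<in> V) (nhdsin X v)"
    using V net_in_nhdsin[OF v] \<open>v \<in> V\<close> by (simp add: GSI2_open_def)
  then show "\<exists>T. openin X T \<and> v \<in> T \<and> T \<subseteq> V"
    using v by (auto simp: eventually_nhdsin)
qed

lemma GSI2_open_imp_SI2_open:
  assumes V: "GSI2_open X V"
  shows "SI2_open X V"
  unfolding SI2_open_def
proof (intro conjI allI impI)
  show "openin X V"
    using V by (rule GSI2_open_imp_openin)
  fix D assume D: "irreducible_in X D" and "cut_delta X D \<inter> V \<noteq> {}"
  then obtain x where x: "x \<in> cut_delta X D" "x \<in> V"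
    by blast
  have "eventually (\<lambda>y. y \<in> U) (open_trace_filter X D)" if "openin X U" "U \<inter> D \<noteq> {}" for U
    using that by (auto simp: eventually_open_trace_filter[OF D])
  then have "GSI2_converges X (open_trace_filter X D) x"
    by (rule GSI2_convergesI_irreducible[OF D x(1)])
  then have "eventually (\<lambda>y. y \<in> V) (open_trace_filter X D)"
    using V net_in_open_trace_filter[OF D] x(2) by (simp add: GSI2_open_def)
  then show "D \<inter> V \<noteq> {}"
    by (auto simp: eventually_open_trace_filter[OF D])
qed

definition GSI2_topology :: "'a topology \<Rightarrow> 'a topology" where
  "GSI2_topology X = topology (GSI2_open X)"

lemma istopology_GSI2_open: "istopology (GSI2_open X)"
  unfolding istopology_def
proof (intro conjI allI impI)
  fix S T assume "GSI2_open X S" "GSI2_open X T"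
  then have "eventually (\<lambda>y. y \<in> S \<inter> T) F"
    if "net_in X F" "x \<in> S \<inter> T" "GSI2_converges X F x" for F x
    using that unfolding GSI2_open_def by (auto intro: eventually_conj)
  with \<open>GSI2_open X S\<close> show "GSI2_open X (S \<inter> T)"
    by (auto simp: GSI2_open_def)
next
  fix \<K> assume \<K>: "\<forall>K\<in>\<K>. GSI2_open X K"
  have "eventually (\<lambda>y. y \<in> \<Union>\<K>) F"
    if F: "net_in X F" "GSI2_converges X F x" and x: "x \<in> \<Union>\<K>" for F x
  proof -
    obtain K where "K \<in> \<K>" "x \<in> K"
      using x by blast
    then have "eventually (\<lambda>y. y \<in> K) F"
      using \<K> F by (simp add: GSI2_open_def)
    then show ?thesis
      by (rule eventually_mono) (use \<open>K \<in> \<K>\<close> in blast)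
  qed
  moreover have "\<Union>\<K> \<subseteq> topspace X"
    using \<K> by (auto simp: GSI2_open_def)
  ultimately show "GSI2_open X (\<Union>\<K>)"
    by (simp add: GSI2_open_def)
qed

lemma openin_GSI2_topology: "openin (GSI2_topology X) = GSI2_open X"
  by (simp add: GSI2_topology_def istopology_GSI2_open)

lemma topspace_GSI2_topology: "topspace (GSI2_topology X) = topspace X"
proof -
  have "GSI2_open X (topspace X)"
    by (simp add: GSI2_open_def net_in_def)
  moreover have "S \<subseteq> topspace X" if "GSI2_open X S" for S
    using that by (simp add: GSI2_open_def)
  ultimately show ?thesis
    unfolding topspace_def[of "GSI2_topology X"] openin_GSI2_topology by blast
qed

lemma GSI2_topological_witness:
  assumes top: "GSI2_topological X" and x: "x \<in> topspace X"
  obtains \<F> where "\<F> \<subseteq> fin_subsets X" "irreducible_in (smyth_space X) (upset X ` \<F>)"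
    "\<Inter> (upset X ` \<F>) \<subseteq> upset X {x}"
    "\<And>U. openin X U \<Longrightarrow> \<exists>G\<in>\<F>. G \<subseteq> U \<Longrightarrow> \<exists>W. SI2_open X W \<and> x \<in> W \<and> W \<subseteq> U"
proof -
  let ?N = "nhdsin (GSI2_topology X) x"
  have "net_in X ?N"
    using net_in_nhdsin[of x "GSI2_topology X"] x by (simp add: net_in_def topspace_GSI2_topology)
  moreover have "\<forall>U. GSI2_open X U \<longrightarrow> x \<in> U \<longrightarrow> eventually (\<lambda>y. y \<in> U) ?N"
    by (auto simp: eventually_nhdsin openin_GSI2_topology)
  ultimately have "GSI2_converges X ?N x"
    using top x unfolding GSI2_topological_def by blast
  then obtain \<F> where \<F>: "\<F> \<subseteq> fin_subsets X" "irreducible_in (smyth_space X) (upset X ` \<F>)"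
    "\<Inter> (upset X ` \<F>) \<subseteq> upset X {x}"
    and ev: "\<forall>U. openin X U \<longrightarrow> (\<exists>G\<in>\<F>. upset X G \<subseteq> U) \<longrightarrow> eventually (\<lambda>y. y \<in> U) ?N"
    unfolding GSI2_converges_def by blast
  show thesis
  proof (rule that[OF \<F>])
    fix U assume U: "openin X U" "\<exists>G\<in>\<F>. G \<subseteq> U"
    then have "eventually (\<lambda>y. y \<in> U) ?N"
      using ev upset_subset_openin by blast
    then obtain W where "GSI2_open X W" "x \<in> W" "W \<subseteq> U"
      using x by (auto simp: eventually_nhdsin openin_GSI2_topology topspace_GSI2_topology)
    then show "\<exists>W. SI2_open X W \<and> x \<in> W \<and> W \<subseteq> U"
      using GSI2_open_imp_SI2_open by blast
  qed
qed

lemma I2_way_below_if_SI2_nhds: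
  assumes G: "G \<subseteq> topspace X"
    and nhds: "\<And>U. openin X U \<Longrightarrow> G \<subseteq> U \<Longrightarrow> \<exists>W. SI2_open X W \<and> x \<in> W \<and> W \<subseteq> U"
  shows "I2_way_below X G x"
  unfolding I2_way_below_def
proof (intro allI impI notI)
  fix D assume D: "irreducible_in X D" "x \<in> cut_delta X D" and "G \<inter> X closure_of D = {}"
  then have "G \<subseteq> topspace X - X closure_of D"
    using G by blast
  moreover have "openin X (topspace X - X closure_of D)"
    by (simp add: openin_diff)
  ultimately obtain W where W: "SI2_open X W" "x \<in> W" "W \<subseteq> topspace X - X closure_of D"
    using nhds by blast
  then have "D \<inter> W \<noteq> {}"
    using D unfolding SI2_open_def by blast
  moreover have "D \<subseteq> X closure_of D"
    using D(1) by (simp add: closure_of_subset irreducible_in_def)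
  ultimately show False
    using W(3) by blast
qed

lemma I2_way_below_refined_by_witness:
  assumes \<F>: "\<F> \<subseteq> fin_subsets X" and irr: "irreducible_in (smyth_space X) (upset X ` \<F>)"
    and inter: "\<Inter> (upset X ` \<F>) \<subseteq> upset X {x}" and x: "x \<in> topspace X"
    and F: "I2_way_below X F x" and U: "openin X U" "F \<subseteq> U"
  shows "\<exists>G\<in>\<F>. G \<subseteq> U"
proof (rule ccontr)
  assume "\<not> (\<exists>G\<in>\<F>. G \<subseteq> U)"
  then have "\<forall>G\<in>\<F>. \<not> G \<subseteq> U"
    by blast
  then obtain A where A: "closedin X A" "irreducible_in X A" "A \<inter> U = {}" "\<forall>G\<in>\<F>. A \<inter> G \<noteq> {}"
    by (rule irreducible_closedin_meeting_fin_subsets[OF \<F> irr U(1)])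
  have "x \<in> cut_delta X A"
    unfolding cut_delta_def lower_bounds_def
  proof (intro CollectI conjI ballI)
    show "x \<in> topspace X"
      by (fact x)
    fix u assume u: "u \<in> upper_bounds X A"
    have "u \<in> upset X G" if "G \<in> \<F>" for G
    proof -
      have "A \<inter> G \<noteq> {}"
        using A(4) that by blast
      then obtain a where "a \<in> A" "a \<in> G"
        by blast
      then show ?thesis
        using u by (auto simp: upper_bounds_def upset_def)
    qed
    then have "u \<in> upset X {x}"
      using inter by blast
    then show "spec_le X x u"
      by (simp add: mem_upset_singleton)
  qed
  then have "F \<inter> X closure_of A \<noteq> {}"
    using F A(2) by (simp add: I2_way_below_def)
  then show False
    using A(1,3) U(2) by (auto simp: closure_of_closedin)
qed

lemma upset_subset_Inter_wI2:
  assumes x: "x \<in> topspace X"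
  shows "upset X {x} \<subseteq> \<Inter> (wI2 X x)"
proof (intro subsetI InterI)
  fix u Q assume u: "u \<in> upset X {x}" and "Q \<in> wI2 X x"
  then obtain F where F: "I2_way_below X F x" "Q = upset X F"
    by (auto simp: wI2_def)
  then have "F \<inter> X closure_of {x} \<noteq> {}"
    using irreducible_in_singleton[OF x] in_cut_delta_singleton[OF x] by (simp add: I2_way_below_def)
  then obtain f where "f \<in> F" "spec_le X f x"
    using x closure_of_subset_topspace by (fastforce simp: spec_le_def)
  moreover have "spec_le X x u"
    using u by (simp add: mem_upset_singleton)
  ultimately have "spec_le X f u"
    by (blast intro: spec_le_trans)
  with \<open>f \<in> F\<close> show "u \<in> Q"
    using F(2) by (auto simp: upset_def spec_le_def)
qed

lemma irreducible_wI2: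
  assumes \<F>: "\<F> \<subseteq> fin_subsets X" and irr: "irreducible_in (smyth_space X) (upset X ` \<F>)"
    and sub: "upset X ` \<F> \<subseteq> wI2 X x"
    and refine: "\<And>F U. I2_way_below X F x \<Longrightarrow> openin X U \<Longrightarrow> F \<subseteq> U \<Longrightarrow> \<exists>G\<in>\<F>. G \<subseteq> U"
  shows "irreducible_in (smyth_space X) (wI2 X x)"
proof (rule irreducible_in_closure_between[OF irr sub], rule subsetI)
  fix Q assume "Q \<in> wI2 X x"
  then obtain F where F: "F \<in> fin_subsets X" "I2_way_below X F x" "Q = upset X F"
    by (auto simp: wI2_def)
  show "Q \<in> smyth_space X closure_of (upset X ` \<F>)"
  proof (rule in_closure_of_smyth_spaceI)
    show "Q \<in> smyth_carrier X"
      using F by (simp add: upset_in_smyth_carrier)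
    fix V assume V: "openin X V" "Q \<subseteq> V"
    have "F \<subseteq> V"
      using F V(2) subset_upset[of F X] by (auto simp: fin_subsets_def)
    then obtain G where G: "G \<in> \<F>" "G \<subseteq> V"
      using refine F(2) V(1) by blast
    then have "upset X G \<in> smyth_box X V"
      using \<F> V(1) by (subst upset_in_smyth_box_iff) auto
    then show "\<exists>P\<in>upset X ` \<F>. P \<in> smyth_box X V"
      using G(1) by blast
  qed
qed

lemma GSI2_topological_imp_QI2_at:
  assumes top: "GSI2_topological X" and x: "x \<in> topspace X"
  shows "irreducible_in (smyth_space X) (wI2 X x)"
    and "upset X {x} = \<Inter> (wI2 X x)"
    and "\<And>F U. I2_way_below X F x \<Longrightarrow> openin X U \<Longrightarrow> F \<subseteq> U \<Longrightarrow>
           \<exists>W. SI2_open X W \<and> x \<in> W \<and> W \<subseteq> U"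
proof -
  obtain \<F> where \<F>: "\<F> \<subseteq> fin_subsets X" and irr: "irreducible_in (smyth_space X) (upset X ` \<F>)"
    and inter: "\<Inter> (upset X ` \<F>) \<subseteq> upset X {x}"
    and nhds: "\<And>U. openin X U \<Longrightarrow> \<exists>G\<in>\<F>. G \<subseteq> U \<Longrightarrow> \<exists>W. SI2_open X W \<and> x \<in> W \<and> W \<subseteq> U"
    using GSI2_topological_witness[OF top x] by blast
  have refine: "\<exists>G\<in>\<F>. G \<subseteq> U" if "I2_way_below X F x" "openin X U" "F \<subseteq> U" for F U
    using I2_way_below_refined_by_witness[OF \<F> irr inter x that] .
  have "I2_way_below X G x" if "G \<in> \<F>" for G
  proof (rule I2_way_below_if_SI2_nhds)
    show "G \<subseteq> topspace X"
      using \<F> that by (auto simp: fin_subsets_def)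
    fix U assume "openin X U" "G \<subseteq> U"
    then show "\<exists>W. SI2_open X W \<and> x \<in> W \<and> W \<subseteq> U"
      using nhds that by blast
  qed
  then have sub: "upset X ` \<F> \<subseteq> wI2 X x"
    using \<F> by (auto simp: wI2_def)
  show "irreducible_in (smyth_space X) (wI2 X x)"
    by (rule irreducible_wI2[OF \<F> irr sub refine])
  have "\<Inter> (wI2 X x) \<subseteq> upset X {x}"
    using Inter_anti_mono[OF sub] inter by blast
  with upset_subset_Inter_wI2[OF x] show "upset X {x} = \<Inter> (wI2 X x)"
    by (rule subset_antisym)
  fix F U assume "I2_way_below X F x" "openin X U" "F \<subseteq> U"
  then have "\<exists>G\<in>\<F>. G \<subseteq> U"
    by (rule refine)
  then show "\<exists>W. SI2_open X W \<and> x \<in> W \<and> W \<subseteq> U"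
    by (rule nhds[OF \<open>openin X U\<close>])
qed

theorem proposition4p10:
  fixes X :: "'a topology"
  assumes "t0_space X"
    and "GSI2_topological X"
  shows "strongly_QI2_continuous X"
  unfolding strongly_QI2_continuous_def QI2_continuous_def
  using GSI2_topological_imp_QI2_at[OF assms(2)] by blast

end
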